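(* Let $(\varphi_n)_{n\ge0}$ be vectors in $\mathbb{R}^d$, $r_0=1$, $r_n=1+\sum_{i=1}^n\|\varphi_i\|^2$, and assume $r_n\to\infty$ and $r_n=O(r_{n-1})$. Then there exist a constant $l\ge 1$ and a strictly increasing sequence of nonnegative integers $(t_k)_{k\ge0}$ such that for all $k\ge1$ $$\frac{k}{l}<\frac{r_{t_k}}{r_{t_{k-1}}}<lk,$$ i.e. $r_{t_k}=\Theta(k\,r_{t_{k-1}})$.
   Context: $r_n=O(r_{n-1})$ means there is a constant $C$ with $r_n\le C r_{n-1}$ for all $n\ge1$. *)

theory Defs
  imports "HOL-Analysis.Analysis"
begin

definition rseq :: "(nat \<Rightarrow> 'a::real_normed_vector) \<Rightarrow> nat \<Rightarrow> real" where
  "rseq \<phi> n = 1 + (\<Sum>i=1..n. (norm (\<phi> i))\<^sup>2)"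

end

theory Submission
  imports Defs
begin

text \<open>Pick the times greedily: t_0 = 0 and t_(k+1) is the first index at which r exceeds
(k+1) r_(t_k); this exists because r is unbounded. The ratio r_(t_(k+1)) / r_(t_k) then exceeds
k+1 by construction, while minimality gives r_(t_(k+1) - 1) \<le> (k+1) r_(t_k), and one step of
bounded growth r_n \<le> C r_(n-1) turns this into the upper bound (|C|+1)(k+1).\<close>

fun linear_jumps :: "(nat \<Rightarrow> real) \<Rightarrow> nat \<Rightarrow> nat" where
  "linear_jumps r 0 = 0"
| "linear_jumps r (Suc k) = (LEAST n. real (Suc k) * r (linear_jumps r k) < r n)"

lemma rseq_mono: "mono (rseq \<phi>)"
  unfolding rseq_def by (intro monoI add_left_mono sum_mono2) auto

lemma rseq_pos: "rseq \<phi> n > 0"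
  unfolding rseq_def by (simp add: add_pos_nonneg sum_nonneg)

lemma linear_jumps_exceeds:
  assumes "filterlim r at_top sequentially"
  shows "real (Suc k) * r (linear_jumps r k) < r (linear_jumps r (Suc k))"
proof -
  let ?z = "real (Suc k) * r (linear_jumps r k)"
  have "eventually (\<lambda>n. ?z < r n) sequentially"
    using assms unfolding filterlim_at_top_dense by blast
  then obtain n where "?z < r n"
    unfolding eventually_sequentially by auto
  then show ?thesis
    unfolding linear_jumps.simps by (rule LeastI)
qed

lemma linear_jumps_less_Suc:
  assumes "mono r" "\<And>n. r n > 0" "filterlim r at_top sequentially"
  shows "linear_jumps r k < linear_jumps r (Suc k)"
proof (rule ccontr)
  assume "\<not> linear_jumps r k < linear_jumps r (Suc k)"
  then have "r (linear_jumps r (Suc k)) \<le> r (linear_jumps r k)"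
    using \<open>mono r\<close> by (simp add: monoD)
  also have "\<dots> \<le> real (Suc k) * r (linear_jumps r k)"
    using assms(2)[of "linear_jumps r k"] by simp
  finally show False
    using linear_jumps_exceeds[OF assms(3), of k] by simp
qed

lemma linear_jumps_strict_mono:
  assumes "mono r" "\<And>n. r n > 0" "filterlim r at_top sequentially"
  shows "strict_mono (linear_jumps r)"
  using linear_jumps_less_Suc[OF assms] by (rule strict_monoI_Suc)

lemma linear_jumps_before:
  assumes "mono r" "\<And>n. r n > 0" "filterlim r at_top sequentially"
  shows "r (linear_jumps r (Suc k) - 1) \<le> real (Suc k) * r (linear_jumps r k)"
proof -
  have "linear_jumps r (Suc k) - 1 < linear_jumps r (Suc k)"
    using linear_jumps_less_Suc[OF assms, of k] by simp
  then have "\<not> real (Suc k) * r (linear_jumps r k) < r (linear_jumps r (Suc k) - 1)"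
    unfolding linear_jumps.simps by (rule not_less_Least)
  then show ?thesis by simp
qed

lemma linear_ratio_subsequence:
  fixes r :: "nat \<Rightarrow> real"
  assumes "mono r" "\<And>n. r n > 0" "filterlim r at_top sequentially"
    and growth: "\<And>n. n \<ge> 1 \<Longrightarrow> r n \<le> C * r (n - 1)"
  shows "\<exists>l::real. l \<ge> 1 \<and> (\<exists>t::nat \<Rightarrow> nat. strict_mono t \<and>
           (\<forall>k\<ge>1. real k / l < r (t k) / r (t (k - 1)) \<and> r (t k) / r (t (k - 1)) < l * real k))"
proof (intro exI conjI allI impI)
  define t where "t = linear_jumps r"
  show "1 \<le> \<bar>C\<bar> + 1" by simp
  show "strict_mono t"
    unfolding t_def using assms(1-3) by (rule linear_jumps_strict_mono)
  fix k :: nat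
  assume "k \<ge> 1"
  then obtain j where k: "k = Suc j" by (cases k) auto
  have prev_pos: "r (t j) > 0" using assms(2) .
  have "r (t k) \<le> C * r (t k - 1)"
    using growth linear_jumps_less_Suc[OF assms(1-3), of j] unfolding t_def k by simp
  also have "\<dots> \<le> \<bar>C\<bar> * r (t k - 1)"
    using assms(2)[of "t k - 1"] by (simp add: mult_right_mono)
  also have "\<dots> \<le> \<bar>C\<bar> * (real k * r (t j))"
    using linear_jumps_before[OF assms(1-3), of j] unfolding t_def k
    by (simp add: mult_left_mono)
  also have "\<dots> < (\<bar>C\<bar> + 1) * real k * r (t j)"
    using prev_pos \<open>k \<ge> 1\<close> by (simp add: algebra_simps)
  finally show "r (t k) / r (t (k - 1)) < (\<bar>C\<bar> + 1) * real k"
    using prev_pos k by (simp add: divide_less_eq)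
  have "real k / (\<bar>C\<bar> + 1) \<le> real k"
    by (simp add: divide_le_eq mult_le_cancel_left1)
  also have "real k < r (t k) / r (t j)"
    using linear_jumps_exceeds[OF assms(3), of j] prev_pos unfolding t_def k
    by (simp add: less_divide_eq)
  finally show "real k / (\<bar>C\<bar> + 1) < r (t k) / r (t (k - 1))"
    using k by simp
qed

theorem mainTheorem4:
  fixes \<phi> :: "nat \<Rightarrow> real ^ 'd"
  assumes "filterlim (rseq \<phi>) at_top sequentially"
    and "\<exists>C. \<forall>n\<ge>1. rseq \<phi> n \<le> C * rseq \<phi> (n - 1)"
  shows "\<exists>l::real. l \<ge> 1 \<and> (\<exists>t::nat \<Rightarrow> nat. strict_mono t \<and>
           (\<forall>k\<ge>1. real k / l < rseq \<phi> (t k) / rseq \<phi> (t (k - 1)) \<and>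
                   rseq \<phi> (t k) / rseq \<phi> (t (k - 1)) < l * real k))"
proof -
  obtain C where "\<And>n. n \<ge> 1 \<Longrightarrow> rseq \<phi> n \<le> C * rseq \<phi> (n - 1)"
    using assms(2) by blast
  then show ?thesis
    using linear_ratio_subsequence[OF rseq_mono rseq_pos assms(1)] by blast
qed

end
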